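(* Let $\beta=0$, $R\ge0$, and let $D\ge4$ be even. For $n>0$ let $\alpha_\infty^n$ be the maximum value of $\alpha_0$ over all numerical walls for the Chern character $(-R,0,n,0)$ on $\mathbb{P}^3$. Then $\alpha_\infty^D=\alpha_\infty^{D-1}$. In particular, $D-2<\alpha_\infty^D\le D-1$.
   Context: On $\mathbb{P}^3$ with hyperplane class $H$, Chern characters are the vectors of coefficients of $1,H,H^2,H^3$. For $v=(-R,0,n,0)$ and the Bayer–Macrì–Toda stability conditions $\sigma_{0,\alpha,s}$ ($\alpha,s>0$; central charge $Z=-(\operatorname{ch}_3-(s+\frac16)\alpha^2\operatorname{ch}_1)+\sqrt{-1}(\operatorname{ch}_2-\frac{\alpha^2}{2}\operatorname{ch}_0)$), a numerical wall is a curve $(s+\frac16)\alpha^2=\alpha_0^2/6$ with $\alpha_0^2=6e/c$, where $(r,c,d,e)=\operatorname{ch}(A)$ for some $A\in D^b(\mathbb{P}^3)$ with $c>0$ satisfying $0<d<n$, $0<c(6e)\le\min\{4d^2,4(n-d)^2\}$, and $-\frac{c(2n-2d)}{6e}-R\le r\le\frac{2cd}{6e}$. *)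

theory Defs
  imports Complex_Main
begin

text \<open>Chern characters on P^3 are written as quadruples (ch0, ch1, ch2, ch3) of
coefficients of 1, H, H^2, H^3.  The Chern character of O(k) is
(1, k, k^2/2, k^3/6).  Chern characters of objects of D^b(P^3): since
O, O(1), O(2), O(3) generate K_0(P^3) (Beilinson), these are exactly the
integral combinations of ch(O(k)), k = 0..3.\<close>

definition is_ch_P3 :: "real \<Rightarrow> real \<Rightarrow> real \<Rightarrow> real \<Rightarrow> bool" where
  "is_ch_P3 r c d e \<longleftrightarrow> (\<exists>a :: nat \<Rightarrow> int.
      r = (\<Sum>k\<le>3. real_of_int (a k)) \<and>
      c = (\<Sum>k\<le>3. real_of_int (a k) * real k) \<and>
      d = (\<Sum>k\<le>3. real_of_int (a k) * real k ^ 2 / 2) \<and>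
      e = (\<Sum>k\<le>3. real_of_int (a k) * real k ^ 3 / 6))"

definition wall_alphas :: "real \<Rightarrow> real \<Rightarrow> real set" where
  "wall_alphas R n = {sqrt (6 * e / c) | r c d e.
      is_ch_P3 r c d e \<and> c > 0 \<and> 0 < d \<and> d < n \<and>
      0 < c * (6 * e) \<and> c * (6 * e) \<le> min (4 * d ^ 2) (4 * (n - d) ^ 2) \<and>
      - (c * (2 * n - 2 * d)) / (6 * e) - R \<le> r \<and> r \<le> 2 * c * d / (6 * e)}"

definition alpha_inf :: "real \<Rightarrow> real \<Rightarrow> real" where
  "alpha_inf R n = Max (wall_alphas R n)"

end

theory Submission
  imports Defs
begin

text \<open>Writing \<open>ch(A) = (r, C, M/2, E/6)\<close> with integers \<open>r, C, M, E\<close>, a numerical wall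
has \<open>\<alpha>\<^sub>0\<^sup>2 = E/C\<close> and \<open>C E \<le> min(M, 2n - M)\<^sup>2 \<le> n\<^sup>2\<close>. For \<open>n \<le> D\<close>, a wall with
\<open>\<alpha>\<^sub>0 > D - 2\<close> therefore needs \<open>C = 1\<close>; then \<open>M \<equiv> C\<close> is odd, hence \<open>M = D \<plusminus> 1\<close>, which forces
\<open>E \<le> (D - 1)\<^sup>2\<close> and \<open>E \<equiv> 1 (mod 6)\<close>. Conversely every such \<open>E\<close> is realised by
\<open>r = 0, C = 1, M = D - 1\<close> both for \<open>n = D\<close> and for \<open>n = D - 1\<close>. So the values \<open>\<alpha>\<^sub>0 > D - 2\<close> are
the same for both values of \<open>n\<close>, and there is one: \<open>(D - 1)\<^sup>2\<close> or \<open>(D - 1)\<^sup>2 - 2\<close> is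
\<open>1 mod 6\<close>.\<close>

lemma Max_eq_Max_above:
  fixes A :: "'a :: linorder set"
  assumes "finite A" "{x \<in> A. a < x} \<noteq> {}"
  shows "Max A = Max {x \<in> A. a < x}"
proof (rule Max_eqI[OF \<open>finite A\<close>])
  have above: "Max {x \<in> A. a < x} \<in> {x \<in> A. a < x}"
    using assms by (intro Max_in) simp_all
  then show "Max {x \<in> A. a < x} \<in> A"
    by simp
  fix y assume "y \<in> A"
  show "y \<le> Max {x \<in> A. a < x}"
  proof (cases "a < y")
    case True
    with \<open>y \<in> A\<close> \<open>finite A\<close> show ?thesis
      by (intro Max_ge) simp_all
  next
    case False
    then have "y \<le> a"
      by simp
    also have "a < Max {x \<in> A. a < x}"
      using above by simp
    finally show ?thesis
      by (rule less_imp_le)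
  qed
qed

lemma sum_atMost_3: "(\<Sum>k\<le>(3::nat). f k) = f 0 + f 1 + f 2 + (f 3 :: 'a::comm_monoid_add)"
  by (simp add: eval_nat_numeral atMost_Suc add_ac)

lemma is_ch_P3_iff:
  "is_ch_P3 r c d e \<longleftrightarrow>
    (\<exists>r' C M E :: int. r = of_int r' \<and> c = C \<and> d = M / 2 \<and> e = E / 6 \<and>
       even (M - C) \<and> 6 dvd (E - 3 * M + 2 * C))"
proof
  assume "is_ch_P3 r c d e"
  then obtain a :: "nat \<Rightarrow> int" where
    "r = a 0 + a 1 + a 2 + a 3" "c = a 1 + 2 * a 2 + 3 * a 3"
    "d = (a 1 + 4 * a 2 + 9 * a 3) / 2" "e = (a 1 + 8 * a 2 + 27 * a 3) / 6"
    unfolding is_ch_P3_def sum_atMost_3 by (auto simp: field_simps)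
  then show "\<exists>r' C M E :: int. r = of_int r' \<and> c = C \<and> d = M / 2 \<and> e = E / 6 \<and>
       even (M - C) \<and> 6 dvd (E - 3 * M + 2 * C)"
    by (intro exI[of _ "a 0 + a 1 + a 2 + a 3"] exI[of _ "a 1 + 2 * a 2 + 3 * a 3"]
        exI[of _ "a 1 + 4 * a 2 + 9 * a 3"] exI[of _ "a 1 + 8 * a 2 + 27 * a 3"]) auto
next
  assume "\<exists>r' C M E :: int. r = of_int r' \<and> c = C \<and> d = M / 2 \<and> e = E / 6 \<and>
       even (M - C) \<and> 6 dvd (E - 3 * M + 2 * C)"
  then obtain r' C M E :: int where ch: "r = of_int r'" "c = C" "d = M / 2" "e = E / 6"
    and "even (M - C)" "6 dvd (E - 3 * M + 2 * C)"
    by blast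
  then obtain k l where k: "M - C = 2 * k" and l: "E - 3 * M + 2 * C = 6 * l"
    by (meson dvdE evenE)
  have M: "M = (C - 2 * k + 3 * l) + 4 * (k - 3 * l) + 9 * l"
    using k by (simp add: algebra_simps)
  have E: "E = (C - 2 * k + 3 * l) + 8 * (k - 3 * l) + 27 * l"
    using k l by (simp add: algebra_simps)
  show "is_ch_P3 r c d e"
    unfolding is_ch_P3_def sum_atMost_3
    by (intro exI[of _ "\<lambda>i. [r' - C + k - l, C - 2 * k + 3 * l, k - 3 * l, l] ! i"])
      (simp add: ch M E field_simps)
qed

text \<open>\<open>(C, M, E) = (ch\<^sub>1, 2 ch\<^sub>2, 6 ch\<^sub>3)\<close> of the object \<open>A\<close>. The rank
\<open>ch\<^sub>0\<close> is dropped: for \<open>R \<ge> 0\<close> the rank conditions always admit \<open>ch\<^sub>0 = 0\<close>.\<close>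

definition numerical_wall :: "real \<Rightarrow> int \<Rightarrow> int \<Rightarrow> int \<Rightarrow> bool" where
  "numerical_wall n C M E \<longleftrightarrow>
     0 < C \<and> 0 < M \<and> M < 2 * n \<and> 0 < C * E \<and>
     C * E \<le> M\<^sup>2 \<and> C * E \<le> (2 * n - M)\<^sup>2 \<and> even (M - C) \<and> 6 dvd (E - 3 * M + 2 * C)"

lemma numerical_wall_pos:
  assumes "numerical_wall n C M E"
  shows "0 < C" "0 < E"
  using assms zero_less_mult_pos unfolding numerical_wall_def by blast+

lemma numerical_wall_of_int_iff:
  "numerical_wall (of_int N) C M E \<longleftrightarrow>
     0 < C \<and> 0 < M \<and> M < 2 * N \<and> 0 < C * E \<and>
     C * E \<le> M\<^sup>2 \<and> C * E \<le> (2 * N - M)\<^sup>2 \<and> even (M - C) \<and> 6 dvd (E - 3 * M + 2 * C)"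
proof -
  have "(2 * of_int N - of_int M :: real)\<^sup>2 = of_int ((2 * N - M)\<^sup>2)"
    by simp
  then have "of_int (C * E) \<le> (2 * of_int N - of_int M :: real)\<^sup>2 \<longleftrightarrow> C * E \<le> (2 * N - M)\<^sup>2"
    by (simp only: of_int_le_iff)
  moreover have "of_int M < 2 * (of_int N :: real) \<longleftrightarrow> M < 2 * N"
    by linarith
  ultimately show ?thesis
    unfolding numerical_wall_def by (simp only:)
qed

lemma wall_alphas_eq_numerical_walls:
  assumes "R \<ge> 0"
  shows "wall_alphas R n = {sqrt (E / C) | C M E. numerical_wall n C M E}"
proof (intro equalityI subsetI)
  fix x assume "x \<in> wall_alphas R n"
  then obtain r c d e where x: "x = sqrt (6 * e / c)" and ch: "is_ch_P3 r c d e"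
    and bounds: "0 < c" "0 < d" "d < n" "0 < c * (6 * e)"
      "c * (6 * e) \<le> min (4 * d\<^sup>2) (4 * (n - d)\<^sup>2)"
    unfolding wall_alphas_def by blast
  from ch obtain C M E :: int where "c = C" "d = M / 2" "e = E / 6"
    and "even (M - C)" "6 dvd (E - 3 * M + 2 * C)"
    unfolding is_ch_P3_iff by blast
  with x bounds have "x = sqrt (E / C)" "numerical_wall n C M E"
    unfolding numerical_wall_def by (auto simp: power2_eq_square field_simps simp flip: of_int_mult)
  then show "x \<in> {sqrt (E / C) | C M E. numerical_wall n C M E}"
    by auto
next
  fix x assume "x \<in> {sqrt (E / C) | C M E. numerical_wall n C M E}"
  then obtain C M E where x: "x = sqrt (E / C)" and wall: "numerical_wall n C M E"
    by blast
  have "0 < E"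
    by (rule numerical_wall_pos[OF wall])
  with wall have "0 \<le> C * (2 * n - M) / E" "0 \<le> C * M / E"
    unfolding numerical_wall_def by simp_all
  with assms have "- (C * (2 * n - 2 * (M / 2))) / (6 * (E / 6)) - R \<le> 0"
    and "0 \<le> 2 * real_of_int C * (M / 2) / (6 * (E / 6))"
    by simp_all
  moreover have "is_ch_P3 0 C (M / 2) (E / 6)"
    using wall unfolding is_ch_P3_iff numerical_wall_def by force
  moreover have "x = sqrt (6 * (E / 6) / C)" "0 < real_of_int C" "0 < real_of_int M / 2"
    "real_of_int M / 2 < n" "0 < real_of_int C * (6 * (real_of_int E / 6))"
    "real_of_int C * (6 * (real_of_int E / 6))
       \<le> min (4 * (real_of_int M / 2)\<^sup>2) (4 * (n - real_of_int M / 2)\<^sup>2)"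
    using wall x unfolding numerical_wall_def
    by (auto simp: power2_eq_square field_simps simp flip: of_int_mult)
  ultimately show "x \<in> wall_alphas R n"
    unfolding wall_alphas_def by blast
qed

lemma numerical_wall_le_square:
  assumes "numerical_wall n C M E"
  shows "of_int (C * E) \<le> n\<^sup>2"
proof (cases "M \<le> n")
  case True
  from assms have "C * E \<le> M\<^sup>2" "0 < M"
    unfolding numerical_wall_def by simp_all
  then have "of_int (C * E) \<le> (of_int (M\<^sup>2) :: real)"
    by (simp only: of_int_le_iff)
  also have "\<dots> \<le> n\<^sup>2"
    unfolding of_int_power using True \<open>0 < M\<close> by (intro power_mono) linarith+
  finally show ?thesis .
next
  case False
  from assms have "of_int M < 2 * n"
    unfolding numerical_wall_def by simp
  from assms have "of_int (C * E) \<le> (2 * n - of_int M)\<^sup>2"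
    unfolding numerical_wall_def by simp
  also have "(2 * n - of_int M)\<^sup>2 \<le> n\<^sup>2"
    using False \<open>of_int M < 2 * n\<close> by (intro power_mono) linarith+
  finally show ?thesis .
qed

lemma finite_wall_alphas:
  assumes "R \<ge> 0"
  shows "finite (wall_alphas R n)"
proof -
  define K where "K = \<lceil>n\<^sup>2\<rceil>"
  have "wall_alphas R n \<subseteq> (\<lambda>(C, E). sqrt (E / C)) ` ({1..K} \<times> {1..K})"
  proof
    fix x assume "x \<in> wall_alphas R n"
    then obtain C M E where x: "x = sqrt (E / C)" and wall: "numerical_wall n C M E"
      using wall_alphas_eq_numerical_walls[OF assms] by blast
    have "0 < C" "0 < E"
      using numerical_wall_pos[OF wall] by simp_all
    from wall have "of_int (C * E) \<le> n\<^sup>2"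
      by (rule numerical_wall_le_square)
    then have "C * E \<le> K"
      unfolding K_def by (simp add: le_ceiling_iff)
    moreover have "C \<le> C * E" "E \<le> C * E"
      using \<open>0 < C\<close> \<open>0 < E\<close> by simp_all
    ultimately have "C \<le> K" "E \<le> K"
      by (meson order_trans)+
    with \<open>0 < C\<close> \<open>0 < E\<close> have "(C, E) \<in> {1..K} \<times> {1..K}"
      by simp
    with x show "x \<in> (\<lambda>(C, E). sqrt (E / C)) ` ({1..K} \<times> {1..K})"
      by force
  qed
  then show ?thesis
    by (rule finite_subset) simp
qed

lemma numerical_wall_rank_one:
  assumes wall: "numerical_wall n C M E" and "n \<le> N" "4 \<le> N"
    and above: "(N - 2)\<^sup>2 < E / C"
  shows "C = 1"
proof (rule ccontr)
  assume "C \<noteq> 1"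
  with wall have "2 \<le> C" "0 < M" "of_int M < 2 * n"
    unfolding numerical_wall_def by simp_all
  then have "0 \<le> n" by simp
  have "N \<le> 2 * (N - 2)"
    using \<open>4 \<le> N\<close> by simp
  also have "\<dots> \<le> C * (N - 2)"
    using \<open>2 \<le> C\<close> \<open>4 \<le> N\<close> by (intro mult_right_mono) simp_all
  finally have "N\<^sup>2 \<le> (C * (N - 2))\<^sup>2"
    using \<open>4 \<le> N\<close> by (intro power_mono) simp_all
  also have "\<dots> = C * (C * (N - 2)\<^sup>2)"
    by (simp add: power2_eq_square)
  also have "\<dots> < C * E"
    using above \<open>2 \<le> C\<close> by (simp add: pos_less_divide_eq mult.commute)
  also have "\<dots> \<le> n\<^sup>2"
    using numerical_wall_le_square[OF wall] by simp
  also have "\<dots> \<le> N\<^sup>2"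
    using \<open>0 \<le> n\<close> \<open>n \<le> N\<close> by (intro power_mono) simp_all
  finally show False
    by simp
qed

lemma numerical_wall_top:
  fixes D N M E :: int
  assumes wall: "numerical_wall N 1 M E" and N: "N = D \<or> N = D - 1"
    and "even D" and above: "(D - 2)\<^sup>2 < E"
  shows "E \<le> (D - 1)\<^sup>2 \<and> E mod 6 = 1"
proof -
  from wall have "odd M" "0 < M" "M < 2 * N" "E \<le> M\<^sup>2" "E \<le> (2 * N - M)\<^sup>2"
    and "6 dvd E - 3 * M + 2"
    unfolding numerical_wall_of_int_iff by simp_all
  have "D - 2 < M"
    using above \<open>E \<le> M\<^sup>2\<close> \<open>0 < M\<close> by (auto intro: power2_less_imp_less)
  moreover have "D - 2 < 2 * N - M"
    using above \<open>E \<le> (2 * N - M)\<^sup>2\<close> \<open>M < 2 * N\<close> by (auto intro: power2_less_imp_less)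
  ultimately have "M = D - 1 \<or> 2 * N - M = D - 1"
    using N \<open>odd M\<close> \<open>even D\<close> by presburger
  then have "E \<le> (D - 1)\<^sup>2"
    using \<open>E \<le> M\<^sup>2\<close> \<open>E \<le> (2 * N - M)\<^sup>2\<close> by auto
  moreover have "E mod 6 = 1"
    using \<open>odd M\<close> \<open>6 dvd E - 3 * M + 2\<close> by presburger
  ultimately show ?thesis ..
qed

lemma numerical_wall_top_witness:
  fixes D N E :: int
  assumes N: "N = D \<or> N = D - 1" and "even D" "2 \<le> D"
    and "0 < E" "E \<le> (D - 1)\<^sup>2" "E mod 6 = 1"
  shows "numerical_wall N 1 (D - 1) E"
proof -
  have "(D - 1)\<^sup>2 \<le> (2 * N - (D - 1))\<^sup>2"
    using N \<open>2 \<le> D\<close> by (intro power_mono) auto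
  moreover have "6 dvd E - 3 * (D - 1) + 2"
    using \<open>even D\<close> \<open>E mod 6 = 1\<close> by presburger
  ultimately show ?thesis
    using assms unfolding numerical_wall_of_int_iff by auto
qed

definition top_alpha_squares :: "int \<Rightarrow> int set" where
  "top_alpha_squares D = {E. (D - 2)\<^sup>2 < E \<and> E \<le> (D - 1)\<^sup>2 \<and> E mod 6 = 1}"

lemma wall_alphas_above:
  fixes D N :: int
  assumes "R \<ge> 0" "even D" "4 \<le> D" and N: "N = D \<or> N = D - 1"
  shows "{x \<in> wall_alphas R (of_int N). of_int D - 2 < x} =
    (\<lambda>E. sqrt (of_int E)) ` top_alpha_squares D"
proof (intro equalityI subsetI)
  fix x assume "x \<in> {x \<in> wall_alphas R (of_int N). of_int D - 2 < x}"
  then obtain C M E where x: "x = sqrt (E / C)" and wall: "numerical_wall N C M E"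
    and "of_int D - 2 < x"
    using wall_alphas_eq_numerical_walls[OF \<open>R \<ge> 0\<close>] by auto
  have "0 < C" "0 < E"
    using numerical_wall_pos[OF wall] by simp_all
  then have "0 \<le> E / C"
    by simp
  have "(of_int D - 2)\<^sup>2 < (sqrt (E / C))\<^sup>2"
    using \<open>of_int D - 2 < x\<close> x \<open>4 \<le> D\<close> by (intro power_strict_mono) auto
  then have above: "(of_int D - 2)\<^sup>2 < E / C"
    using \<open>0 \<le> E / C\<close> by simp
  have "C = 1"
    using numerical_wall_rank_one[OF wall _ _ above] N \<open>4 \<le> D\<close> by auto
  with above have "of_int ((D - 2)\<^sup>2) < (of_int E :: real)"
    by simp
  then have "(D - 2)\<^sup>2 < E"
    by (simp only: of_int_less_iff)
  with wall \<open>C = 1\<close> N \<open>even D\<close> have "E \<le> (D - 1)\<^sup>2 \<and> E mod 6 = 1"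
    using numerical_wall_top by blast
  with \<open>(D - 2)\<^sup>2 < E\<close> x \<open>C = 1\<close> show "x \<in> (\<lambda>E. sqrt (of_int E)) ` top_alpha_squares D"
    unfolding top_alpha_squares_def by auto
next
  fix x assume "x \<in> (\<lambda>E. sqrt (of_int E)) ` top_alpha_squares D"
  then obtain E where x: "x = sqrt E"
    and E: "(D - 2)\<^sup>2 < E" "E \<le> (D - 1)\<^sup>2" "E mod 6 = 1"
    unfolding top_alpha_squares_def by blast
  have "0 < E"
    using E(1) zero_le_power2[of "D - 2"] by linarith
  have "numerical_wall N 1 (D - 1) E"
    using assms E \<open>0 < E\<close> by (intro numerical_wall_top_witness) auto
  then have "x \<in> wall_alphas R N"
    using wall_alphas_eq_numerical_walls[OF \<open>R \<ge> 0\<close>] x by force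
  moreover have "of_int ((D - 2)\<^sup>2) < (of_int E :: real)"
    using E(1) by (simp only: of_int_less_iff)
  then have "(of_int D - 2)\<^sup>2 < (of_int E :: real)"
    by simp
  then have "of_int D - 2 < x"
    unfolding x by (rule real_less_rsqrt)
  ultimately show "x \<in> {x \<in> wall_alphas R (of_int N). of_int D - 2 < x}"
    by simp
qed

lemma top_alpha_squares_nonempty:
  assumes "even D" "3 \<le> D"
  shows "top_alpha_squares D \<noteq> {}"
proof -
  define k where "k = D - 1"
  have "k mod 6 = 1 \<or> k mod 6 = 3 \<or> k mod 6 = 5"
    using \<open>even D\<close> unfolding k_def by presburger
  then have "(k mod 6)\<^sup>2 mod 6 = 1 \<or> (k mod 6)\<^sup>2 mod 6 = 3"
    by auto
  then consider "k\<^sup>2 mod 6 = 1" | "k\<^sup>2 mod 6 = 3"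
    by (auto simp only: power_mod)
  moreover have gap: "(k - 1)\<^sup>2 < k\<^sup>2 - 2"
    using \<open>3 \<le> D\<close> unfolding k_def by (simp add: power2_eq_square algebra_simps)
  ultimately have "\<exists>E. (k - 1)\<^sup>2 < E \<and> E \<le> k\<^sup>2 \<and> E mod 6 = 1"
  proof cases
    case 1
    with gap show ?thesis
      by (intro exI[of _ "k\<^sup>2"]) simp
  next
    case 2
    then have "(k\<^sup>2 - 2) mod 6 = 1"
      by (simp add: mod_diff_left_eq[of "k\<^sup>2" 6 2, symmetric])
    with gap show ?thesis
      by (intro exI[of _ "k\<^sup>2 - 2"]) simp
  qed
  then show ?thesis
    unfolding top_alpha_squares_def k_def by (auto simp: algebra_simps)
qed

lemma finite_top_alpha_squares: "finite (top_alpha_squares D)"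
  unfolding top_alpha_squares_def
  by (rule finite_subset[of _ "{(D - 2)\<^sup>2..(D - 1)\<^sup>2}"]) auto

lemma alpha_inf_eq_Max_top_alpha_squares:
  fixes D N :: int
  assumes "R \<ge> 0" "even D" "4 \<le> D" "N = D \<or> N = D - 1"
  shows "alpha_inf R N = Max ((\<lambda>E. sqrt (of_int E)) ` top_alpha_squares D)"
proof -
  have "top_alpha_squares D \<noteq> {}"
    using assms by (intro top_alpha_squares_nonempty) simp_all
  with assms show ?thesis
    unfolding alpha_inf_def
    by (simp add: Max_eq_Max_above[OF finite_wall_alphas, of R _ "of_int D - 2"] wall_alphas_above)
qed

theorem lemma4p3:
  fixes R :: int and D :: nat
  assumes "R \<ge> 0" and "D \<ge> 4" and "even D"
  shows "alpha_inf (real_of_int R) (real D) = alpha_inf (real_of_int R) (real D - 1)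
    \<and> real D - 2 < alpha_inf (real_of_int R) (real D)
    \<and> alpha_inf (real_of_int R) (real D) \<le> real D - 1"
proof -
  let ?S = "(\<lambda>E. sqrt (of_int E)) ` top_alpha_squares (int D)"
  have "alpha_inf R (real D) = Max ?S" "alpha_inf R (real D - 1) = Max ?S"
    using alpha_inf_eq_Max_top_alpha_squares[of R "int D" "int D"]
      alpha_inf_eq_Max_top_alpha_squares[of R "int D" "int D - 1"] assms by simp_all
  moreover have "Max ?S \<in> ?S"
    using top_alpha_squares_nonempty[of "int D"] finite_top_alpha_squares assms
    by (intro Max_in) auto
  then obtain E where E: "Max ?S = sqrt (of_int E)" "(int D - 2)\<^sup>2 < E" "E \<le> (int D - 1)\<^sup>2"
    unfolding top_alpha_squares_def by blast
  then have "of_int ((int D - 2)\<^sup>2) < real_of_int E" "real_of_int E \<le> of_int ((int D - 1)\<^sup>2)"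
    by (simp_all only: of_int_less_iff of_int_le_iff)
  with E(1) \<open>D \<ge> 4\<close> have "real D - 2 < Max ?S" "Max ?S \<le> real D - 1"
    by (auto intro: real_less_rsqrt real_le_lsqrt)
  ultimately show ?thesis
    by simp
qed

end
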